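(* Let $\pi\in\mathcal P(\mathbb R^d)$ satisfy the standing decomposition assumption with constants $\mathsf M,\mathsf L$, and let $h>0$. For the Random–Walk Metropolis kernel with step size $h$, the rejection probability $$r(x)=1-\mathbb E_{\xi\sim\mathcal N(0,I)}\Big[\min\Big\{1,\frac{\pi(x+h\xi)}{\pi(x)}\Big\}\Big]$$ satisfies, for every $x\in\mathbb R^d$, $$r(x)\ \le\ \frac12+\mathsf L h\sqrt d+\frac14\mathsf M h^2 d .$$
   Context: Standing decomposition assumption: $\pi$ has a positive density with $\log\pi(x)=f(x)+g(x)$, where $f$ is differentiable with $\|\nabla f(x)-\nabla f(y)\|\le \mathsf M\|x-y\|$ for all $x,y$, and $g$ is $\mathsf L$-Lipschitz: $|g(x)-g(y)|\le\mathsf L\|x-y\|$ for all $x,y$. Norms are Euclidean. *)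

theory Defs
  imports "HOL-Analysis.Analysis"
begin

definition std_normal_nd :: "('a::euclidean_space) measure" where
  "std_normal_nd = density lborel
     (\<lambda>x. ennreal ((2 * pi) powr (- real DIM('a) / 2) * exp (- (norm x)\<^sup>2 / 2)))"

definition rwm_rejection :: "('a::euclidean_space \<Rightarrow> real) \<Rightarrow> real \<Rightarrow> 'a \<Rightarrow> real" where
  "rwm_rejection \<pi> h x =
     1 - (\<integral>\<xi>. min 1 (\<pi> (x + h *\<^sub>R \<xi>) / \<pi> x) \<partial>std_normal_nd)"

end

theory Submission
  imports Defs "HOL-Probability.Distributions"
begin

(* Write log pi = f + g and compare the acceptance probabilities of the opposite proposals
   x + h xi and x - h xi. The first-order terms grad f(x) . (+-h xi) have opposite signs, so one
   of the two log-ratios is at least -c(xi) with c(xi) = M h^2 |xi|^2 / 2 + L h |xi|; hence the two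
   acceptance probabilities add up to at least 1 - c(xi). Since the Gaussian is symmetric,
   averaging gives 2 (1 - r(x)) >= 1 - M h^2 d / 2 - L h E|xi|, and E|xi| <= sqrt d. This even
   yields the bound with L h sqrt d / 2 in place of L h sqrt d. *)

subsection \<open>The standard Gaussian on a Euclidean space\<close>

definition std_normal_nd_pdf :: "'a::euclidean_space \<Rightarrow> real" where
  "std_normal_nd_pdf x = (2 * pi) powr (- real DIM('a) / 2) * exp (- (norm x)\<^sup>2 / 2)"

lemma std_normal_nd_eq_density:
  "std_normal_nd = density lborel (\<lambda>x. ennreal (std_normal_nd_pdf x))"
  unfolding std_normal_nd_def std_normal_nd_pdf_def ..

lemma sets_std_normal_nd [simp, measurable_cong]: "sets std_normal_nd = sets borel"
  by (simp add: std_normal_nd_eq_density)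

lemma std_normal_nd_pdf_nonneg [simp]: "0 \<le> std_normal_nd_pdf x"
  by (simp add: std_normal_nd_pdf_def)

lemma std_normal_nd_pdf_uminus [simp]: "std_normal_nd_pdf (- x) = std_normal_nd_pdf x"
  by (simp add: std_normal_nd_pdf_def)

lemma borel_measurable_std_normal_nd_pdf [measurable]:
  "std_normal_nd_pdf \<in> borel_measurable borel"
  unfolding std_normal_nd_pdf_def by measurable

lemma std_normal_nd_pdf_eq_prod:
  "std_normal_nd_pdf x = (\<Prod>b\<in>Basis. std_normal_density (x \<bullet> b))"
proof -
  have "(\<Prod>b\<in>Basis. std_normal_density (x \<bullet> b))
      = (1 / sqrt (2 * pi)) ^ DIM('a) * (\<Prod>b\<in>Basis. exp (- (x \<bullet> b)\<^sup>2 / 2))"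
    unfolding std_normal_density_def prod.distrib by simp
  also have "(1 / sqrt (2 * pi)) ^ DIM('a) = ((2 * pi) powr (- 1 / 2)) ^ DIM('a)"
    by (simp add: powr_minus_divide powr_half_sqrt[symmetric])
  also have "\<dots> = (2 * pi) powr (- real DIM('a) / 2)"
    by (simp add: powr_realpow[symmetric] powr_powr)
  also have "(\<Prod>b\<in>Basis. exp (- (x \<bullet> b)\<^sup>2 / 2)) = exp (- (norm x)\<^sup>2 / 2)"
    using euclidean_inner[of x x]
    by (simp add: exp_sum[symmetric] sum_divide_distrib[symmetric] sum_negf power2_eq_square
        flip: power2_norm_eq_inner)
  finally show ?thesis
    by (simp add: std_normal_nd_pdf_def)
qed

lemma nn_integral_std_normal_density:
  "(\<integral>\<^sup>+x. ennreal (std_normal_density x) \<partial>lborel) = 1"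
  by (subst nn_integral_eq_integral) auto

lemma prob_space_std_normal_nd: "prob_space (std_normal_nd :: 'a::euclidean_space measure)"
proof (rule prob_spaceI)
  have "(\<integral>\<^sup>+x. ennreal (std_normal_nd_pdf (x::'a)) \<partial>lborel)
      = (\<integral>\<^sup>+x. (\<Prod>b\<in>Basis. ennreal (std_normal_density ((x::'a) \<bullet> b))) \<partial>lborel)"
    by (simp add: std_normal_nd_pdf_eq_prod prod_ennreal)
  also have "\<dots> = (\<Prod>b\<in>(Basis::'a set). \<integral>\<^sup>+t. ennreal (std_normal_density t) \<partial>lborel)"
    by (rule nn_integral_lborel_prod) auto
  also have "\<dots> = 1"
    by (simp add: nn_integral_std_normal_density)
  finally show "emeasure (std_normal_nd :: 'a measure) (space std_normal_nd) = 1"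
    by (simp add: std_normal_nd_eq_density emeasure_density)
qed

lemma nn_integral_std_normal_nd_pdf_norm_sq:
  "(\<integral>\<^sup>+x. ennreal (std_normal_nd_pdf (x::'a::euclidean_space) * (norm x)\<^sup>2) \<partial>lborel)
     = DIM('a)"
proof -
  define m :: "'a \<Rightarrow> 'a \<Rightarrow> real \<Rightarrow> real"
    where "m c b t = std_normal_density t * (if b = c then t\<^sup>2 else 1)" for c b t
  have m_nonneg: "0 \<le> m c b t" for c b t
    by (simp add: m_def)
  have m_integral: "(\<integral>\<^sup>+t. ennreal (m c b t) \<partial>lborel) = 1" for c b
  proof (cases "b = c")
    case True
    have "(\<integral>t. std_normal_density t * t ^ (2 * 1) \<partial>lborel) = 1"
      using integral_std_normal_moment_even[of 1] by simp
    then have "(\<integral>\<^sup>+t. ennreal (std_normal_density t * t\<^sup>2) \<partial>lborel) = 1"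
      using integrable_std_normal_moment[of 2]
      by (subst nn_integral_eq_integral) auto
    with True show ?thesis
      by (simp add: m_def)
  next
    case False
    then show ?thesis
      by (simp add: m_def nn_integral_std_normal_density)
  qed
  have pdf_norm_sq_eq:
    "std_normal_nd_pdf x * (norm x)\<^sup>2 = (\<Sum>c\<in>Basis. \<Prod>b\<in>Basis. m c b (x \<bullet> b))" for x :: 'a
  proof -
    have "(\<Sum>c\<in>Basis. \<Prod>b\<in>Basis. m c b (x \<bullet> b))
        = (\<Sum>c\<in>Basis. std_normal_nd_pdf x * (x \<bullet> c)\<^sup>2)"
      by (simp add: m_def prod.distrib prod.delta std_normal_nd_pdf_eq_prod)
    also have "\<dots> = std_normal_nd_pdf x * (norm x)\<^sup>2"
      using euclidean_inner[of x x]
      by (simp add: sum_distrib_left[symmetric] power2_eq_square flip: power2_norm_eq_inner)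
    finally show ?thesis ..
  qed
  have "(\<integral>\<^sup>+x. ennreal (std_normal_nd_pdf (x::'a) * (norm x)\<^sup>2) \<partial>lborel)
      = (\<integral>\<^sup>+x. (\<Sum>c\<in>Basis. \<Prod>b\<in>Basis. ennreal (m c b (x \<bullet> b))) \<partial>lborel)"
    unfolding pdf_norm_sq_eq by (simp add: m_nonneg prod_nonneg sum_nonneg sum_ennreal prod_ennreal)
  also have "\<dots>
      = (\<Sum>c\<in>(Basis::'a set). \<integral>\<^sup>+x. (\<Prod>b\<in>Basis. ennreal (m c b (x \<bullet> b))) \<partial>lborel)"
    by (rule nn_integral_sum) (auto simp: m_def)
  also have "\<dots>
      = (\<Sum>c\<in>(Basis::'a set). \<Prod>b\<in>(Basis::'a set). \<integral>\<^sup>+t. ennreal (m c b t) \<partial>lborel)"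
    by (intro sum.cong refl nn_integral_lborel_prod) (auto simp: m_def)
  finally show ?thesis
    by (simp add: m_integral)
qed

lemma has_bochner_integral_std_normal_nd_norm_sq:
  "has_bochner_integral std_normal_nd (\<lambda>x::'a::euclidean_space. (norm x)\<^sup>2) (real DIM('a))"
proof -
  have "(\<integral>\<^sup>+x. ennreal ((norm x)\<^sup>2) \<partial>(std_normal_nd :: 'a measure))
      = (\<integral>\<^sup>+x. ennreal (std_normal_nd_pdf (x::'a) * (norm x)\<^sup>2) \<partial>lborel)"
    by (simp add: std_normal_nd_eq_density nn_integral_density ennreal_mult'[symmetric])
  also have "\<dots> = ennreal (real DIM('a))"
    by (simp add: nn_integral_std_normal_nd_pdf_norm_sq ennreal_of_nat_eq_real_of_nat)
  finally show ?thesis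
    by (intro has_bochner_integral_nn_integral) auto
qed

lemma integrable_std_normal_nd_norm_sq:
  "integrable std_normal_nd (\<lambda>x::'a::euclidean_space. (norm x)\<^sup>2)"
  using has_bochner_integral_std_normal_nd_norm_sq by (rule integrable.intros)

lemma integral_std_normal_nd_norm_sq:
  "(\<integral>x. (norm x)\<^sup>2 \<partial>(std_normal_nd :: 'a::euclidean_space measure)) = real DIM('a)"
  using has_bochner_integral_std_normal_nd_norm_sq by (rule has_bochner_integral_integral_eq)

lemma integral_std_normal_nd_reflect:
  fixes \<phi> :: "'a::euclidean_space \<Rightarrow> real"
  assumes [measurable]: "\<phi> \<in> borel_measurable borel"
  shows "(\<integral>x. \<phi> (- x) \<partial>std_normal_nd) = (\<integral>x. \<phi> x \<partial>std_normal_nd)"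
proof -
  have lborel_reflect: "distr lborel borel uminus = (lborel :: 'a measure)"
    using lborel_affine[of "-1::real" "0::'a"] by (simp add: density_1 comp_def)
  have "(\<integral>x. \<phi> (- x) \<partial>std_normal_nd)
      = (\<integral>x. std_normal_nd_pdf (- x) * \<phi> (- x) \<partial>lborel)"
    by (simp add: std_normal_nd_eq_density integral_density)
  also have "\<dots> = (\<integral>x. std_normal_nd_pdf x * \<phi> x \<partial>distr lborel borel uminus)"
    by (subst integral_distr) auto
  also have "\<dots> = (\<integral>x. \<phi> x \<partial>std_normal_nd)"
    by (simp add: lborel_reflect std_normal_nd_eq_density integral_density)
  finally show ?thesis .
qed

lemma
  shows integrable_std_normal_nd_norm:
      "integrable std_normal_nd (norm :: 'a::euclidean_space \<Rightarrow> real)"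
    and integral_std_normal_nd_norm_le:
      "(\<integral>x. norm x \<partial>(std_normal_nd :: 'a measure)) \<le> sqrt DIM('a)"
proof -
  interpret prob_space "std_normal_nd :: 'a measure"
    by (rule prob_space_std_normal_nd)
  define s where "s = sqrt DIM('a)"
  have "s > 0"
    by (simp add: s_def)
  then have am_gm: "norm x \<le> ((norm x)\<^sup>2 / s + s) / 2" for x :: 'a
    using sum_squares_bound[of "norm x" s] by (simp add: field_simps power2_eq_square)
  have int_bound: "integrable std_normal_nd (\<lambda>x::'a. ((norm x)\<^sup>2 / s + s) / 2)"
    by (simp add: integrable_std_normal_nd_norm_sq)
  show int: "integrable std_normal_nd (norm :: 'a \<Rightarrow> real)"
  proof (rule Bochner_Integration.integrable_bound[OF int_bound])
    show "AE x in (std_normal_nd :: 'a measure).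
            norm (norm x) \<le> norm (((norm x)\<^sup>2 / s + s) / 2)"
      using am_gm \<open>s > 0\<close> by (intro AE_I2) (simp add: abs_of_nonneg)
  qed simp
  have "(\<integral>x. norm x \<partial>(std_normal_nd :: 'a measure))
      \<le> (\<integral>x. ((norm x)\<^sup>2 / s + s) / 2 \<partial>(std_normal_nd :: 'a measure))"
    using int int_bound am_gm by (intro integral_mono)
  also have "\<dots> = s"
    using \<open>s > 0\<close>
    by (simp add: integrable_std_normal_nd_norm_sq integral_std_normal_nd_norm_sq prob_space s_def
        field_simps)
  finally show "(\<integral>x. norm x \<partial>(std_normal_nd :: 'a measure)) \<le> sqrt DIM('a)"
    by (simp add: s_def)
qed

lemma integral_std_normal_nd_ge_of_reflection_bound:
  fixes \<phi> :: "'a::euclidean_space \<Rightarrow> real"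
  assumes [measurable]: "\<phi> \<in> borel_measurable borel"
    and bounded: "\<And>\<xi>. \<bar>\<phi> \<xi>\<bar> \<le> C"
    and "0 \<le> b"
    and reflection: "\<And>\<xi>. 1 - (a * (norm \<xi>)\<^sup>2 + b * norm \<xi>) \<le> \<phi> \<xi> + \<phi> (- \<xi>)"
  shows "(1 - (a * DIM('a) + b * sqrt DIM('a))) / 2 \<le> (\<integral>\<xi>. \<phi> \<xi> \<partial>std_normal_nd)"
proof -
  interpret prob_space "std_normal_nd :: 'a measure"
    by (rule prob_space_std_normal_nd)
  have int: "integrable std_normal_nd \<phi>"
    by (rule integrable_const_bound[where B = C]) (use bounded in auto)
  have int_reflect: "integrable std_normal_nd (\<lambda>\<xi>. \<phi> (- \<xi>))"
    by (rule integrable_const_bound[where B = C]) (use bounded in auto)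
  have "1 - (a * DIM('a) + b * sqrt DIM('a))
      \<le> 1 - (a * DIM('a) + b * (\<integral>\<xi>. norm \<xi> \<partial>(std_normal_nd :: 'a measure)))"
    using mult_left_mono[OF integral_std_normal_nd_norm_le \<open>0 \<le> b\<close>] by simp
  also have "\<dots> = (\<integral>\<xi>. 1 - (a * (norm \<xi>)\<^sup>2 + b * norm \<xi>) \<partial>(std_normal_nd :: 'a measure))"
    by (simp add: integrable_std_normal_nd_norm integrable_std_normal_nd_norm_sq
        integral_std_normal_nd_norm_sq prob_space)
  also have "\<dots> \<le> (\<integral>\<xi>. \<phi> \<xi> + \<phi> (- \<xi>) \<partial>std_normal_nd)"
    using int int_reflect reflection
    by (intro integral_mono)
      (auto simp: integrable_std_normal_nd_norm integrable_std_normal_nd_norm_sq)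
  also have "\<dots> = 2 * (\<integral>\<xi>. \<phi> \<xi> \<partial>std_normal_nd)"
    using int int_reflect by (simp add: integral_std_normal_nd_reflect)
  finally show ?thesis
    by simp
qed

subsection \<open>Lower bounds for the log-density increment\<close>

lemma lipschitz_gradient_lower_bound:
  fixes f :: "'a::real_inner \<Rightarrow> real" and gradf :: "'a \<Rightarrow> 'a"
  assumes f_diff: "\<And>x. (f has_derivative (\<lambda>v. gradf x \<bullet> v)) (at x)"
    and f_smooth: "\<And>x y. norm (gradf x - gradf y) \<le> M * norm (x - y)"
  shows "gradf x \<bullet> v - M / 2 * (norm v)\<^sup>2 \<le> f (x + v) - f x"
proof -
  define F where "F t = f (x + t *\<^sub>R v) - t * (gradf x \<bullet> v) + M / 2 * t\<^sup>2 * (norm v)\<^sup>2" for t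
  define F' where "F' t = (gradf (x + t *\<^sub>R v) - gradf x) \<bullet> v + M * t * (norm v)\<^sup>2" for t
  have F_deriv: "(F has_real_derivative F' t) (at t)" for t
  proof -
    have "((\<lambda>t. x + t *\<^sub>R v) has_derivative (\<lambda>s. s *\<^sub>R v)) (at t)"
      by (auto intro!: derivative_eq_intros)
    from has_derivative_compose[OF this f_diff]
    have "((\<lambda>t. f (x + t *\<^sub>R v)) has_derivative (\<lambda>s. gradf (x + t *\<^sub>R v) \<bullet> (s *\<^sub>R v))) (at t)"
      by (simp add: o_def)
    then have "((\<lambda>t. f (x + t *\<^sub>R v)) has_real_derivative (gradf (x + t *\<^sub>R v) \<bullet> v)) (at t)"
      by (simp add: has_real_derivative_iff_has_vector_derivative has_vector_derivative_def
          mult.commute)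
    then show ?thesis
      unfolding F_def F'_def
      by (auto intro!: derivative_eq_intros simp: power2_eq_square algebra_simps inner_diff_left)
  qed
  have F'_nonneg: "0 \<le> F' t" if "0 \<le> t" for t
  proof -
    have "\<bar>(gradf (x + t *\<^sub>R v) - gradf x) \<bullet> v\<bar>
        \<le> norm (gradf (x + t *\<^sub>R v) - gradf x) * norm v"
      by (rule Cauchy_Schwarz_ineq2)
    also have "\<dots> \<le> M * norm (t *\<^sub>R v) * norm v"
      using f_smooth[of "x + t *\<^sub>R v" x] by (intro mult_right_mono) auto
    also have "\<dots> = M * t * (norm v)\<^sup>2"
      using that by (simp add: power2_eq_square)
    finally show ?thesis
      by (simp add: F'_def)
  qed
  have "F 0 \<le> F 1"
    using F_deriv F'_nonneg by (intro DERIV_nonneg_imp_nondecreasing[of 0 1 F]) auto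
  then show ?thesis
    by (simp add: F_def)
qed

lemma log_density_increment_lower_bound:
  fixes f g :: "'a::real_inner \<Rightarrow> real" and gradf :: "'a \<Rightarrow> 'a"
  assumes "\<And>x. (f has_derivative (\<lambda>v. gradf x \<bullet> v)) (at x)"
    and "\<And>x y. norm (gradf x - gradf y) \<le> M * norm (x - y)"
    and g_lip: "\<And>x y. \<bar>g x - g y\<bar> \<le> L * norm (x - y)"
  shows "gradf x \<bullet> v - (M / 2 * (norm v)\<^sup>2 + L * norm v)
           \<le> (f (x + v) + g (x + v)) - (f x + g x)"
  using lipschitz_gradient_lower_bound[OF assms(1,2), of x v] g_lip[of "x + v" x] by simp

subsection \<open>Acceptance probabilities of opposite proposals\<close>

definition mh_acceptance :: "('a \<Rightarrow> real) \<Rightarrow> 'a \<Rightarrow> 'a \<Rightarrow> real" where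
  "mh_acceptance \<pi> x y = min 1 (\<pi> y / \<pi> x)"

lemma rwm_rejection_eq_acceptance:
  "rwm_rejection \<pi> h x = 1 - (\<integral>\<xi>. mh_acceptance \<pi> x (x + h *\<^sub>R \<xi>) \<partial>std_normal_nd)"
  unfolding rwm_rejection_def mh_acceptance_def ..

lemma mh_acceptance_nonneg: "(\<And>y. 0 < \<pi> y) \<Longrightarrow> 0 \<le> mh_acceptance \<pi> x y"
  by (simp add: mh_acceptance_def less_imp_le)

lemma abs_mh_acceptance_le_1: "(\<And>y. 0 < \<pi> y) \<Longrightarrow> \<bar>mh_acceptance \<pi> x y\<bar> \<le> 1"
  using mh_acceptance_nonneg[of \<pi> x y] by (simp add: mh_acceptance_def)

lemma min_1_exp_ge: "- c \<le> (a::real) \<Longrightarrow> 0 \<le> c \<Longrightarrow> 1 - c \<le> min 1 (exp a)"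
  using exp_ge_add_one_self[of a] by (simp add: min_def, linarith)

lemma mh_acceptance_reflection_lower_bound:
  fixes \<pi> f g :: "'a::real_inner \<Rightarrow> real" and gradf :: "'a \<Rightarrow> 'a"
  assumes pos: "\<And>x. 0 < \<pi> x"
    and decomp: "\<And>x. ln (\<pi> x) = f x + g x"
    and f_diff: "\<And>x. (f has_derivative (\<lambda>v. gradf x \<bullet> v)) (at x)"
    and f_smooth: "\<And>x y. norm (gradf x - gradf y) \<le> M * norm (x - y)"
    and g_lip: "\<And>x y. \<bar>g x - g y\<bar> \<le> L * norm (x - y)"
  shows "1 - (M / 2 * (norm v)\<^sup>2 + L * norm v)
           \<le> mh_acceptance \<pi> x (x + v) + mh_acceptance \<pi> x (x - v)"
proof -
  define c where "c = M / 2 * (norm v)\<^sup>2 + L * norm v"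
  define \<Delta> where "\<Delta> w = (f (x + w) + g (x + w)) - (f x + g x)" for w
  have acceptance_exp: "mh_acceptance \<pi> x (x + w) = min 1 (exp (\<Delta> w))" for w
    using pos decomp by (simp add: mh_acceptance_def \<Delta>_def exp_diff) (metis exp_ln)
  have "0 \<le> M * norm v" "0 \<le> L * norm v"
    using f_smooth[of "x + v" x] g_lip[of "x + v" x] by (auto intro: order_trans[OF norm_ge_zero])
  then have "0 \<le> M * norm v * norm v / 2 + L * norm v"
    by simp
  then have "0 \<le> c"
    by (simp add: c_def power2_eq_square mult.assoc)
  have increment: "gradf x \<bullet> w - c \<le> \<Delta> w" if "norm w = norm v" for w
    using log_density_increment_lower_bound[OF f_diff f_smooth g_lip, where x = x and v = w] that
    by (simp add: c_def \<Delta>_def)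
  have acceptance_nonneg: "0 \<le> mh_acceptance \<pi> x y" for y
    using pos by (rule mh_acceptance_nonneg)
  from increment[of v] increment[of "- v"] consider "- c \<le> \<Delta> v" | "- c \<le> \<Delta> (- v)"
    by fastforce
  then have "1 - c \<le> mh_acceptance \<pi> x (x + v) + mh_acceptance \<pi> x (x - v)"
  proof cases
    case 1
    then have "1 - c \<le> mh_acceptance \<pi> x (x + v)"
      unfolding acceptance_exp by (rule min_1_exp_ge[OF _ \<open>0 \<le> c\<close>])
    then show ?thesis
      using acceptance_nonneg[of "x - v"] by simp
  next
    case 2
    then have "1 - c \<le> mh_acceptance \<pi> x (x + - v)"
      unfolding acceptance_exp by (rule min_1_exp_ge[OF _ \<open>0 \<le> c\<close>])
    then show ?thesis
      using acceptance_nonneg[of "x + v"] by simp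
  qed
  then show ?thesis
    by (simp add: c_def)
qed

theorem mainTheorem3:
  fixes \<pi> :: "'a::euclidean_space \<Rightarrow> real"
    and f g :: "'a \<Rightarrow> real" and gradf :: "'a \<Rightarrow> 'a"
    and M L h :: real
  assumes meas: "\<pi> \<in> borel_measurable lborel"
    and integ: "integrable lborel \<pi>"
    and prob: "(\<integral>x. \<pi> x \<partial>lborel) = 1"
    and pos: "\<And>x. \<pi> x > 0"
    and decomp: "\<And>x. ln (\<pi> x) = f x + g x"
    and f_diff: "\<And>x. (f has_derivative (\<lambda>v. gradf x \<bullet> v)) (at x)"
    and f_smooth: "\<And>x y. norm (gradf x - gradf y) \<le> M * norm (x - y)"
    and g_lip: "\<And>x y. \<bar>g x - g y\<bar> \<le> L * norm (x - y)"
    and h_pos: "h > 0"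
  shows "rwm_rejection \<pi> h x
           \<le> 1/2 + L * h * sqrt (real DIM('a)) + 1/4 * M * h\<^sup>2 * real DIM('a)"
proof -
  obtain e :: 'a where "e \<in> Basis"
    using nonempty_Basis by blast
  then have "0 \<le> L"
    using g_lip[of e 0] by (auto intro: order_trans[OF abs_ge_zero])
  have [measurable]: "\<pi> \<in> borel_measurable borel"
    using meas by simp
  have "(1 - (M * h\<^sup>2 / 2 * DIM('a) + L * h * sqrt DIM('a))) / 2
          \<le> (\<integral>\<xi>. mh_acceptance \<pi> x (x + h *\<^sub>R \<xi>) \<partial>std_normal_nd)"
  proof (rule integral_std_normal_nd_ge_of_reflection_bound)
    show "(\<lambda>\<xi>. mh_acceptance \<pi> x (x + h *\<^sub>R \<xi>)) \<in> borel_measurable borel"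
      unfolding mh_acceptance_def by measurable
    show "\<bar>mh_acceptance \<pi> x (x + h *\<^sub>R \<xi>)\<bar> \<le> 1" for \<xi>
      using pos by (rule abs_mh_acceptance_le_1)
    show "0 \<le> L * h"
      using \<open>0 \<le> L\<close> h_pos by simp
    show "1 - (M * h\<^sup>2 / 2 * (norm \<xi>)\<^sup>2 + L * h * norm \<xi>)
            \<le> mh_acceptance \<pi> x (x + h *\<^sub>R \<xi>) + mh_acceptance \<pi> x (x + h *\<^sub>R - \<xi>)" for \<xi>
      using mh_acceptance_reflection_lower_bound[OF pos decomp f_diff f_smooth g_lip,
          where x = x and v = "h *\<^sub>R \<xi>"] h_pos
      by (simp add: power_mult_distrib)
  qed
  moreover have "0 \<le> L * h * sqrt DIM('a)"
    using \<open>0 \<le> L\<close> h_pos by simp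
  ultimately show ?thesis
    unfolding rwm_rejection_eq_acceptance by (simp add: field_simps)
qed

end
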